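(* Let $n\ge 2$, let $a_1,\dots,a_n>0$ and $b_1,\dots,b_n\in\mathbb{R}$, and consider the decoupled linear vector field $\dot x_j=-a_jx_j+b_j$ ($j=1,\dots,n$) on $\mathbb{R}^n$, with equilibrium point $x_e=(b_1/a_1,\dots,b_n/a_n)$. Let $\mu_2=\{x\in\mathbb{R}^n : x_{j,\min}\le x_j\le x_{j,\max},\ j=1,\dots,n\}$ be a box (the phase constraint), and let $\lambda\subseteq\mu_2$ be a jump-set. Define the extended jump-set $$\lambda_{\mathrm{ext}}=\{x\in\mu_2:\ \exists t\ge 0 \text{ such that the solution of the vector field starting at } x \text{ lies in } \lambda \text{ at time } t\}.$$ If the equilibrium point $x_e$ is strictly included in $\lambda$, then $\lambda_{\mathrm{ext}}=\mu_2$; in particular the equilibrium point can be reached.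
   Context: Setting: a phase $l_i$ of a hybrid automaton has continuous dynamics given by the vector field above, and a phase constraint $\mu_2(l_i)=\mu_2$ (a box with faces orthogonal to the coordinate axes). The jump-set from phase $l_i$ to the next phase $l_{i+1}$ is $\lambda=\mu_2(l_i)\cap \mu_3^{-1}(X)$, where $\mu_3$ is the reset map of the transition and $X$ is the target set in phase $l_{i+1}$; in particular $\lambda\subseteq\mu_2$. "Strictly included" means $x_e$ lies in the interior of $\lambda$. *)

theory Defs
  imports "HOL-Analysis.Analysis"
begin

definition lin_field :: "real ^ 'n \<Rightarrow> real ^ 'n \<Rightarrow> real ^ 'n \<Rightarrow> real ^ 'n" where
  "lin_field a b x = (\<chi> j. - a $ j * x $ j + b $ j)"

definition is_solution :: "real ^ 'n \<Rightarrow> real ^ 'n \<Rightarrow> real ^ 'n \<Rightarrow> (real \<Rightarrow> real ^ 'n) \<Rightarrow> bool" where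
  "is_solution a b x phi \<longleftrightarrow> phi 0 = x \<and>
     (\<forall>s. (phi has_vector_derivative lin_field a b (phi s)) (at s))"

definition equilibrium :: "real ^ 'n \<Rightarrow> real ^ 'n \<Rightarrow> real ^ 'n" where
  "equilibrium a b = (\<chi> j. b $ j / a $ j)"

definition box_constraint :: "real ^ 'n \<Rightarrow> real ^ 'n \<Rightarrow> (real ^ 'n) set" where
  "box_constraint xmin xmax = {x. \<forall>j. xmin $ j \<le> x $ j \<and> x $ j \<le> xmax $ j}"

definition ext_jump_set :: "real ^ 'n \<Rightarrow> real ^ 'n \<Rightarrow> (real ^ 'n) set \<Rightarrow> (real ^ 'n) set \<Rightarrow> (real ^ 'n) set" where
  "ext_jump_set a b mu2 lam = {x \<in> mu2. \<exists>t\<ge>0. \<exists>phi. is_solution a b x phi \<and> phi t \<in> lam}"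

end

theory Submission
  imports Defs
begin

text \<open>The solution is explicit: coordinate j is xe_j + (x_j - xe_j) exp(-a_j t), which
  tends to the equilibrium xe as t tends to infinity because every a_j is positive. As xe lies
  in the interior of the jump-set, the solution from every point eventually enters it; neither
  the box nor the dimension plays any role.\<close>

lemma has_vector_derivative_vec_lambda:
  fixes g :: "'n::finite \<Rightarrow> real \<Rightarrow> real"
  assumes "\<And>j. (g j has_real_derivative g' j) (at s)"
  shows "((\<lambda>t. \<chi> j. g j t) has_vector_derivative (\<chi> j. g' j)) (at s)"
  unfolding has_vector_derivative_def
  apply (subst has_derivative_componentwise_within)
  using assms
  apply (auto simp: Basis_vec_def inner_axis has_field_derivative_def)
  by (metis (no_types, lifting) ext mult.commute)

definition lin_flow :: "real ^ 'n \<Rightarrow> real ^ 'n \<Rightarrow> real ^ 'n \<Rightarrow> real \<Rightarrow> real ^ 'n" where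
  "lin_flow a b x t =
     (\<chi> j. equilibrium a b $ j + (x $ j - equilibrium a b $ j) * exp (- a $ j * t))"

lemma is_solution_lin_flow:
  assumes "\<forall>j. a $ j \<noteq> 0"
  shows "is_solution a b x (lin_flow a b x)"
  unfolding is_solution_def
proof (intro conjI allI)
  show "lin_flow a b x 0 = x"
    by (simp add: lin_flow_def vec_eq_iff)
next
  fix s
  define xe where "xe = equilibrium a b"
  have "((\<lambda>t. xe $ j + (x $ j - xe $ j) * exp (- a $ j * t)) has_real_derivative
          (x $ j - xe $ j) * (exp (- a $ j * s) * - a $ j)) (at s)" for j
    by (auto intro!: derivative_eq_intros)
  then have "(lin_flow a b x has_vector_derivative
               (\<chi> j. (x $ j - xe $ j) * (exp (- a $ j * s) * - a $ j))) (at s)"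
    unfolding lin_flow_def xe_def by (rule has_vector_derivative_vec_lambda)
  moreover have "a $ j * xe $ j = b $ j" for j
    using assms by (simp add: xe_def equilibrium_def)
  then have "(\<chi> j. (x $ j - xe $ j) * (exp (- a $ j * s) * - a $ j)) = lin_field a b (lin_flow a b x s)"
    by (simp add: lin_field_def lin_flow_def xe_def vec_eq_iff algebra_simps)
  ultimately show "(lin_flow a b x has_vector_derivative lin_field a b (lin_flow a b x s)) (at s)"
    by simp
qed

lemma exp_neg_mult_tendsto_0:
  fixes c :: real
  assumes "c > 0"
  shows "((\<lambda>t. exp (- c * t)) \<longlongrightarrow> 0) at_top"
proof -
  have "filterlim (\<lambda>t. c * t) at_top at_top"
    using assms by (rule filterlim_tendsto_pos_mult_at_top[OF tendsto_const _ filterlim_ident])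
  then have "filterlim (\<lambda>t. - c * t) at_bot at_top"
    by (simp add: filterlim_uminus_at_bot)
  then show ?thesis
    using filterlim_compose[OF exp_at_bot] by (simp add: o_def)
qed

lemma lin_flow_tendsto_equilibrium:
  assumes "\<forall>j. a $ j > 0"
  shows "(lin_flow a b x \<longlongrightarrow> equilibrium a b) at_top"
proof -
  have "((\<lambda>t. equilibrium a b $ j + (x $ j - equilibrium a b $ j) * exp (- a $ j * t))
          \<longlongrightarrow> equilibrium a b $ j + (x $ j - equilibrium a b $ j) * 0) at_top" for j
    using assms by (intro tendsto_intros exp_neg_mult_tendsto_0) auto
  then have "(lin_flow a b x \<longlongrightarrow> (\<chi> j. equilibrium a b $ j + (x $ j - equilibrium a b $ j) * 0)) at_top"
    unfolding lin_flow_def by (rule tendsto_vec_lambda)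
  then show ?thesis
    by simp
qed

lemma ext_jump_set_eq_if_equilibrium_interior:
  assumes "\<forall>j. a $ j > 0"
    and "equilibrium a b \<in> interior lam"
  shows "ext_jump_set a b mu2 lam = mu2"
proof -
  have "\<exists>t\<ge>0. lin_flow a b x t \<in> lam" for x
  proof -
    have "eventually (\<lambda>t. lin_flow a b x t \<in> interior lam) at_top"
      using lin_flow_tendsto_equilibrium[OF assms(1)] assms(2)
      by (rule topological_tendstoD[OF _ open_interior])
    then obtain T where "\<And>t. t \<ge> T \<Longrightarrow> lin_flow a b x t \<in> interior lam"
      unfolding eventually_at_top_linorder by blast
    then have "lin_flow a b x (max T 0) \<in> lam"
      using interior_subset by fastforce
    then show ?thesis
      by (intro exI[of _ "max T 0"]) simp
  qed
  moreover have "is_solution a b x (lin_flow a b x)" for x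
    using assms(1) by (intro is_solution_lin_flow) (simp add: less_imp_neq[symmetric])
  ultimately show ?thesis
    unfolding ext_jump_set_def by blast
qed

theorem theorem2:
  fixes a b xmin xmax :: "real ^ 'n" and lam :: "(real ^ 'n) set"
  assumes "CARD('n) \<ge> 2"
    and "\<forall>j. a $ j > 0"
    and "lam \<subseteq> box_constraint xmin xmax"
    and "equilibrium a b \<in> interior lam"
  shows "ext_jump_set a b (box_constraint xmin xmax) lam = box_constraint xmin xmax"
  using assms(2,4) by (rule ext_jump_set_eq_if_equilibrium_interior)

end
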